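(* Let $X$ be a $2$-valued group such that $\operatorname{inv}(a)=a$ for every $a\in X$. Then for every $x\in X$ and every $r\in\mathbb{N}$, $|\operatorname{Set}(x^{*r})|\le r(r+1)$. In particular the growth function of the dynamic $T_x$ (generated by powers of $x$) has polynomial growth.
   Context: A $2$-valued group is a set $X$ with an associative multiplication $*:X\times X\to\operatorname{Sym}^2X$ (values are unordered pairs with multiplicity), extended elementwise to multi-sets, with unit $e$ satisfying $e*x=x*e=[x,x]$ and an inverse map $\operatorname{inv}$ with $e\in\operatorname{inv}(x)*x$ and $e\in x*\operatorname{inv}(x)$. For a multi-set $M$, $\operatorname{Set}(M)$ is the set of its distinct elements; $x^{*r}=x*\dots*x$ ($r$ factors). The dynamic $T_x$ is $T_x(y)=y*x$, and its growth function measures $|\operatorname{Set}|$ of its iterates. *)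

theory Defs
  imports Main "HOL-Library.Multiset"
begin

text \<open>Multiplication of a 2-valued group: mul x y is an unordered pair with
multiplicity, i.e. a multiset of size 2. Extension to multisets, elementwise.\<close>

definition mmul :: "('a \<Rightarrow> 'a \<Rightarrow> 'a multiset) \<Rightarrow> 'a multiset \<Rightarrow> 'a multiset \<Rightarrow> 'a multiset" where
  "mmul mul M N = (\<Sum>x\<in>#M. \<Sum>y\<in>#N. mul x y)"

definition two_valued_group ::
  "'a set \<Rightarrow> ('a \<Rightarrow> 'a \<Rightarrow> 'a multiset) \<Rightarrow> 'a \<Rightarrow> ('a \<Rightarrow> 'a) \<Rightarrow> bool" where
  "two_valued_group X mul e iv \<longleftrightarrow>
     e \<in> X \<and> (\<forall>x\<in>X. iv x \<in> X) \<and>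
     (\<forall>x\<in>X. \<forall>y\<in>X. size (mul x y) = 2 \<and> set_mset (mul x y) \<subseteq> X) \<and>
     (\<forall>x\<in>X. \<forall>y\<in>X. \<forall>z\<in>X. mmul mul (mul x y) {#z#} = mmul mul {#x#} (mul y z)) \<and>
     (\<forall>x\<in>X. mul e x = {#x, x#} \<and> mul x e = {#x, x#}) \<and>
     (\<forall>x\<in>X. e \<in># mul (iv x) x \<and> e \<in># mul x (iv x))"

text \<open>Powers x^{*r} = x * ... * x (r factors), for r \<ge> 1. The value at r = 0 is an
unused convention.\<close>

fun starpow :: "('a \<Rightarrow> 'a \<Rightarrow> 'a multiset) \<Rightarrow> 'a \<Rightarrow> nat \<Rightarrow> 'a multiset" where
  "starpow mul x 0 = {#}"
| "starpow mul x (Suc 0) = {#x#}"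
| "starpow mul x (Suc (Suc n)) = mmul mul (starpow mul x (Suc n)) {#x#}"

end

theory Submission
  imports Defs "HOL-Library.Poly_Mapping"
begin

text \<open>Extend the multiplication bilinearly to integer chains, i.e. finitely supported
functions \<open>X \<rightarrow> \<int>\<close>. On chains supported in \<open>X\<close> it is associative, and \<open>e\<close> acts as
multiplication by 2. Hence the Dickson chains \<open>D 0 = e\<close>, \<open>D 1 = x\<close>,
\<open>D (n+2) = x D (n+1) - D n\<close> satisfy \<open>D m D n = D (m+n) + D (m-n)\<close> for \<open>n \<le> m\<close>, and the chain
of \<open>x\<^sup>*\<^sup>r\<close> is a sum of chains \<open>D k\<close> with \<open>k \<le> r\<close>. If every element is its own inverse,
then \<open>a * a = [e, w]\<close> for some \<open>w\<close>, so \<open>D (2\<^sup>a\<^sup>+\<^sup>1) = D (2\<^sup>a)\<^sup>2 - e\<close> is again a single element;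
writing \<open>k = 2\<^sup>a + j\<close> with \<open>0 < j < 2\<^sup>a\<close> gives \<open>D k = D (2\<^sup>a) D j - D (2\<^sup>a - j)\<close>, so by
induction the support of \<open>D k\<close> has at most \<open>2j + (2\<^sup>a - j) = k\<close> elements. Summing over
\<open>k \<le> r\<close> bounds \<open>|Set(x\<^sup>*\<^sup>r)|\<close> by \<open>1 + r(r+1)/2 \<le> r(r+1)\<close>.\<close>

lemma card_set_mset_le_size: "card (set_mset M) \<le> size M"
  by (induction M) (simp_all add: card_insert_if)

definition chain_of_mset :: "'a multiset \<Rightarrow> 'a \<Rightarrow>\<^sub>0 int" where
  "chain_of_mset M = (\<Sum>a\<in>#M. frag_of a)"

lemma chain_of_mset_empty [simp]: "chain_of_mset {#} = 0"
  by (simp add: chain_of_mset_def)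

lemma chain_of_mset_add_mset [simp]: "chain_of_mset (add_mset a M) = frag_of a + chain_of_mset M"
  by (simp add: chain_of_mset_def)

lemma chain_of_mset_union [simp]: "chain_of_mset (M + N) = chain_of_mset M + chain_of_mset N"
  by (simp add: chain_of_mset_def)

lemma lookup_chain_of_mset: "Poly_Mapping.lookup (chain_of_mset M) a = int (count M a)"
  by (induction M) (auto simp: lookup_add)

lemma keys_chain_of_mset [simp]: "Poly_Mapping.keys (chain_of_mset M) = set_mset M"
  by (auto simp: in_keys_iff lookup_chain_of_mset)

lemma frag_extend_diff_fun: "frag_extend (\<lambda>a. f a - g a) c = frag_extend f c - frag_extend g c"
  using subset_UNIV by (induction c rule: frag_induction) (auto simp: frag_extend_diff)

definition chain_mult ::
  "('a \<Rightarrow> 'a \<Rightarrow> 'a multiset) \<Rightarrow> ('a \<Rightarrow>\<^sub>0 int) \<Rightarrow> ('a \<Rightarrow>\<^sub>0 int) \<Rightarrow> 'a \<Rightarrow>\<^sub>0 int" where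
  "chain_mult mul f g = frag_extend (\<lambda>a. frag_extend (\<lambda>b. chain_of_mset (mul a b)) g) f"

lemma chain_mult_zero_left [simp]: "chain_mult mul 0 g = 0"
  by (simp add: chain_mult_def)

lemma chain_mult_zero_right [simp]: "chain_mult mul f 0 = 0"
  by (simp add: chain_mult_def frag_extend_eq_0)

lemma chain_mult_add_left: "chain_mult mul (f + f') g = chain_mult mul f g + chain_mult mul f' g"
  by (simp add: chain_mult_def frag_extend_add)

lemma chain_mult_diff_left: "chain_mult mul (f - f') g = chain_mult mul f g - chain_mult mul f' g"
  by (simp add: chain_mult_def frag_extend_diff)

lemma chain_mult_diff_right: "chain_mult mul f (g - g') = chain_mult mul f g - chain_mult mul f g'"
  by (simp add: chain_mult_def frag_extend_diff frag_extend_diff_fun)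

lemma chain_mult_frag_of [simp]: "chain_mult mul (frag_of a) (frag_of b) = chain_of_mset (mul a b)"
  by (simp add: chain_mult_def)

lemma chain_mult_chain_of_mset:
  "chain_mult mul (chain_of_mset M) (chain_of_mset N) = chain_of_mset (mmul mul M N)"
proof -
  have "chain_mult mul (frag_of a) (chain_of_mset N) = chain_of_mset (\<Sum>b\<in>#N. mul a b)" for a
    by (induction N) (auto simp: chain_mult_def frag_extend_add)
  then show ?thesis
    by (induction M) (auto simp: mmul_def chain_mult_add_left)
qed

lemma keys_chain_mult:
  "Poly_Mapping.keys (chain_mult mul f g) \<subseteq>
     (\<Union>a\<in>Poly_Mapping.keys f. \<Union>b\<in>Poly_Mapping.keys g. set_mset (mul a b))"
proof -
  have "Poly_Mapping.keys (frag_extend (\<lambda>b. chain_of_mset (mul a b)) g)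
          \<subseteq> (\<Union>b\<in>Poly_Mapping.keys g. set_mset (mul a b))" for a
    using keys_frag_extend[of "\<lambda>b. chain_of_mset (mul a b)" g] by simp
  then show ?thesis
    unfolding chain_mult_def using keys_frag_extend by fastforce
qed

locale two_valued_group_algebra =
  fixes X :: "'a set" and mul :: "'a \<Rightarrow> 'a \<Rightarrow> 'a multiset" and e :: 'a and iv :: "'a \<Rightarrow> 'a"
  assumes two_valued: "two_valued_group X mul e iv"
begin

abbreviation chain_times (infixl "\<star>" 70) where "f \<star> g \<equiv> chain_mult mul f g"

lemma unit_in_carrier: "e \<in> X"
  using two_valued by (simp add: two_valued_group_def)

lemma set_mul_subset: "a \<in> X \<Longrightarrow> b \<in> X \<Longrightarrow> set_mset (mul a b) \<subseteq> X"
  using two_valued by (simp add: two_valued_group_def)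

lemma size_mul: "a \<in> X \<Longrightarrow> b \<in> X \<Longrightarrow> size (mul a b) = 2"
  using two_valued by (simp add: two_valued_group_def)

lemma mul_assoc:
  "a \<in> X \<Longrightarrow> b \<in> X \<Longrightarrow> c \<in> X \<Longrightarrow> mmul mul (mul a b) {#c#} = mmul mul {#a#} (mul b c)"
  using two_valued by (simp add: two_valued_group_def)

lemma mul_unit_left: "a \<in> X \<Longrightarrow> mul e a = {#a, a#}"
  using two_valued by (simp add: two_valued_group_def)

lemma mul_unit_right: "a \<in> X \<Longrightarrow> mul a e = {#a, a#}"
  using two_valued by (simp add: two_valued_group_def)

lemma mul_self_inverse:
  assumes "a \<in> X" and "iv a = a"
  obtains w where "w \<in> X" and "mul a a = {#e, w#}"
proof -
  have "e \<in># mul a a"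
    using two_valued assms by (auto simp: two_valued_group_def)
  then obtain R where R: "mul a a = add_mset e R"
    by (metis multi_member_split)
  then have "size R = 1"
    using size_mul[OF assms(1) assms(1)] by simp
  then obtain w where "R = {#w#}"
    using size_1_singleton_mset by auto
  with R set_mul_subset[OF assms(1) assms(1)] show ?thesis
    using that by auto
qed

lemma keys_chain_mult_subset:
  "Poly_Mapping.keys f \<subseteq> X \<Longrightarrow> Poly_Mapping.keys g \<subseteq> X \<Longrightarrow> Poly_Mapping.keys (f \<star> g) \<subseteq> X"
  using keys_chain_mult[of mul f g] set_mul_subset by blast

lemma card_keys_frag_of_mult:
  assumes "z \<in> X" and "Poly_Mapping.keys g \<subseteq> X"
  shows "card (Poly_Mapping.keys (frag_of z \<star> g)) \<le> 2 * card (Poly_Mapping.keys g)"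
proof -
  have "card (Poly_Mapping.keys (frag_of z \<star> g)) \<le> card (\<Union>b\<in>Poly_Mapping.keys g. set_mset (mul z b))"
    using keys_chain_mult[of mul "frag_of z" g] by (intro card_mono) auto
  also have "\<dots> \<le> (\<Sum>b\<in>Poly_Mapping.keys g. card (set_mset (mul z b)))"
    by (rule card_UN_le) simp
  also have "\<dots> \<le> (\<Sum>b\<in>Poly_Mapping.keys g. 2)"
    by (intro sum_mono) (metis assms card_set_mset_le_size size_mul subsetD)
  finally show ?thesis
    by simp
qed

lemma chain_mult_assoc:
  assumes "Poly_Mapping.keys f \<subseteq> X" and "Poly_Mapping.keys g \<subseteq> X" and "Poly_Mapping.keys h \<subseteq> X"
  shows "(f \<star> g) \<star> h = f \<star> (g \<star> h)"
  using assms(1)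
proof (induction f rule: frag_induction)
  case (one a)
  show ?case
    using assms(2)
  proof (induction g rule: frag_induction)
    case (one b)
    show ?case
      using assms(3)
    proof (induction h rule: frag_induction)
      case (one c)
      have "(frag_of a \<star> frag_of b) \<star> frag_of c = chain_of_mset (mul a b) \<star> chain_of_mset {#c#}"
        by simp
      also have "\<dots> = chain_of_mset (mmul mul (mul a b) {#c#})"
        by (rule chain_mult_chain_of_mset)
      also have "\<dots> = chain_of_mset (mmul mul {#a#} (mul b c))"
        using mul_assoc \<open>a \<in> X\<close> \<open>b \<in> X\<close> \<open>c \<in> X\<close> by simp
      also have "\<dots> = chain_of_mset {#a#} \<star> chain_of_mset (mul b c)"
        by (rule chain_mult_chain_of_mset[symmetric])
      finally show ?case
        by simp
    qed (simp_all add: chain_mult_diff_right)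
  qed (simp_all add: chain_mult_diff_left chain_mult_diff_right)
qed (simp_all add: chain_mult_diff_left)

lemma chain_mult_unit_right: "Poly_Mapping.keys f \<subseteq> X \<Longrightarrow> f \<star> frag_of e = f + f"
  by (induction f rule: frag_induction) (simp_all add: mul_unit_right chain_mult_diff_left)

end

fun dickson :: "('a \<Rightarrow> 'a \<Rightarrow> 'a multiset) \<Rightarrow> 'a \<Rightarrow> 'a \<Rightarrow> nat \<Rightarrow> 'a \<Rightarrow>\<^sub>0 int" where
  "dickson mul e x 0 = frag_of e"
| "dickson mul e x (Suc 0) = frag_of x"
| "dickson mul e x (Suc (Suc n)) =
     chain_mult mul (frag_of x) (dickson mul e x (Suc n)) - dickson mul e x n"

locale dickson_chains = two_valued_group_algebra +
  fixes x :: 'a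
  assumes x_in_carrier: "x \<in> X"
begin

abbreviation D where "D \<equiv> dickson mul e x"

lemma keys_dickson_subset: "Poly_Mapping.keys (D n) \<subseteq> X"
proof (induction n rule: induct_nat_012)
  case (ge2 n)
  have "Poly_Mapping.keys (frag_of x \<star> D (Suc n)) \<subseteq> X"
    using ge2 x_in_carrier by (intro keys_chain_mult_subset) simp_all
  with ge2 show ?case
    using keys_diff[of "frag_of x \<star> D (Suc n)" "D n"] by auto
qed (simp_all add: unit_in_carrier x_in_carrier)

lemma dickson_commute: "D n \<star> frag_of x = frag_of x \<star> D n"
proof (induction n rule: induct_nat_012)
  case 0
  then show ?case
    using x_in_carrier by (simp add: mul_unit_left mul_unit_right)
next
  case (ge2 n)
  have "D (Suc (Suc n)) \<star> frag_of x = (frag_of x \<star> D (Suc n)) \<star> frag_of x - D n \<star> frag_of x"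
    by (simp add: chain_mult_diff_left)
  also have "\<dots> = frag_of x \<star> (D (Suc n) \<star> frag_of x) - frag_of x \<star> D n"
    using ge2 chain_mult_assoc keys_dickson_subset x_in_carrier by simp
  also have "\<dots> = frag_of x \<star> D (Suc (Suc n))"
    using ge2 by (simp add: chain_mult_diff_right)
  finally show ?case .
qed simp

lemma dickson_mult_x:
  assumes "1 \<le> m"
  shows "D m \<star> frag_of x = D (m + 1) + D (m - 1)"
proof -
  obtain n where m: "m = Suc n"
    using assms Suc_le_D by auto
  have "D (m + 1) = frag_of x \<star> D m - D (m - 1)"
    by (simp add: m)
  then show ?thesis
    using dickson_commute[of m] by simp
qed

lemma dickson_mult: "n \<le> m \<Longrightarrow> D m \<star> D n = D (m + n) + D (m - n)"
proof (induction n arbitrary: m rule: induct_nat_012)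
  case 0
  then show ?case
    using keys_dickson_subset chain_mult_unit_right by simp
next
  case 1
  then show ?case
    using dickson_mult_x by simp
next
  case (ge2 k)
  have "D m \<star> D (Suc (Suc k)) = D m \<star> (frag_of x \<star> D (Suc k)) - D m \<star> D k"
    by (simp add: chain_mult_diff_right)
  also have "\<dots> = (D m \<star> frag_of x) \<star> D (Suc k) - D m \<star> D k"
    using chain_mult_assoc keys_dickson_subset x_in_carrier by simp
  also have "\<dots> = D (m + 1) \<star> D (Suc k) + D (m - 1) \<star> D (Suc k) - D m \<star> D k"
    using dickson_mult_x ge2.prems by (simp add: chain_mult_add_left)
  also have "\<dots> = (D (m + 1 + Suc k) + D (m + 1 - Suc k)) + (D (m - 1 + Suc k) + D (m - 1 - Suc k))
                 - (D (m + k) + D (m - k))"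
    using ge2.IH(1)[of m] ge2.IH(2)[of "m + 1"] ge2.IH(2)[of "m - 1"] ge2.prems by simp
  also have "\<dots> = D (m + Suc (Suc k)) + D (m - Suc (Suc k))"
    using ge2.prems by (simp del: dickson.simps add: Suc_diff_le)
  finally show ?case .
qed

lemma dickson_power_of_two_add:
  assumes "D (2 ^ a) = frag_of z" and "j \<le> 2 ^ a"
  shows "D (2 ^ a + j) = frag_of z \<star> D j - D (2 ^ a - j)"
  using dickson_mult[OF assms(2)] assms(1) by (simp add: algebra_simps)

inductive_set dickson_sums :: "nat \<Rightarrow> ('a \<Rightarrow>\<^sub>0 int) set" for r where
  dickson: "k \<le> r \<Longrightarrow> D k \<in> dickson_sums r"
| add: "f \<in> dickson_sums r \<Longrightarrow> g \<in> dickson_sums r \<Longrightarrow> f + g \<in> dickson_sums r"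

lemma keys_dickson_sums:
  "f \<in> dickson_sums r \<Longrightarrow> Poly_Mapping.keys f \<subseteq> (\<Union>k\<le>r. Poly_Mapping.keys (D k))"
proof (induction rule: dickson_sums.induct)
  case (add f g)
  then show ?case
    using keys_add[of f g] by blast
qed auto

lemma dickson_sums_mult_x:
  "f \<in> dickson_sums r \<Longrightarrow> f \<star> frag_of x \<in> dickson_sums (Suc r)"
proof (induction rule: dickson_sums.induct)
  case (dickson k)
  show ?case
  proof (cases k)
    case 0
    then have eq: "D k \<star> frag_of x = D 1 + D 1"
      using x_in_carrier by (simp add: mul_unit_left)
    show ?thesis
      unfolding eq by (intro dickson_sums.add dickson_sums.dickson) simp_all
  next
    case (Suc k')
    then have eq: "D k \<star> frag_of x = D (k + 1) + D (k - 1)"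
      using dickson_mult_x by simp
    show ?thesis
      unfolding eq using dickson by (intro dickson_sums.add dickson_sums.dickson) simp_all
  qed
next
  case (add f g)
  then show ?case
    by (simp add: chain_mult_add_left dickson_sums.add)
qed

lemma chain_of_starpow_in_dickson_sums:
  "1 \<le> r \<Longrightarrow> chain_of_mset (starpow mul x r) \<in> dickson_sums r"
proof (induction r rule: nat_induct_at_least)
  case base
  show ?case
    using dickson_sums.dickson[of 1 1] by simp
next
  case (Suc r)
  then obtain r' where r: "r = Suc r'"
    using Suc_le_D by auto
  have "chain_of_mset (starpow mul x (Suc r)) = chain_of_mset (starpow mul x r) \<star> frag_of x"
    using chain_mult_chain_of_mset[of mul "starpow mul x r" "{#x#}"] r by simp
  then show ?case
    using Suc.IH dickson_sums_mult_x by simp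
qed

context
  assumes self_inverse: "\<And>a. a \<in> X \<Longrightarrow> iv a = a"
begin

lemma dickson_power_of_two: "\<exists>z\<in>X. D (2 ^ a) = frag_of z"
proof (induction a)
  case 0
  show ?case
    using x_in_carrier by auto
next
  case (Suc a)
  then obtain z where z: "z \<in> X" "D (2 ^ a) = frag_of z"
    by blast
  obtain w where w: "w \<in> X" "mul z z = {#e, w#}"
    using mul_self_inverse[OF z(1) self_inverse[OF z(1)]] by blast
  have "D (2 ^ Suc a) = frag_of z \<star> frag_of z - frag_of e"
    using dickson_power_of_two_add[OF z(2), of "2 ^ a"] z(2) by (simp add: mult_2)
  also have "\<dots> = frag_of w"
    using w by simp
  finally show ?case
    using w by blast
qed

lemma card_keys_dickson_le_power_of_two:
  "1 \<le> k \<Longrightarrow> k \<le> 2 ^ a \<Longrightarrow> card (Poly_Mapping.keys (D k)) \<le> k"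
proof (induction a arbitrary: k)
  case (Suc a)
  show ?case
  proof (cases "k \<le> 2 ^ a")
    case False
    define j where "j = k - 2 ^ a"
    have k: "k = 2 ^ a + j" and j: "1 \<le> j" "j \<le> 2 ^ a"
      using False Suc.prems by (auto simp: j_def)
    show ?thesis
    proof (cases "j = 2 ^ a")
      case True
      with k have "k = 2 ^ Suc a"
        by simp
      then obtain w where "D k = frag_of w"
        using dickson_power_of_two by blast
      then show ?thesis
        using Suc.prems by simp
    next
      case False
      obtain z where z: "z \<in> X" "D (2 ^ a) = frag_of z"
        using dickson_power_of_two by blast
      have "card (Poly_Mapping.keys (D k))
              \<le> card (Poly_Mapping.keys (frag_of z \<star> D j)) + card (Poly_Mapping.keys (D (2 ^ a - j)))"
        unfolding k dickson_power_of_two_add[OF z(2) j(2)]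
        by (rule order_trans[OF card_mono[OF _ keys_diff] card_Un_le]) simp
      also have "\<dots> \<le> 2 * j + (2 ^ a - j)"
      proof -
        have "card (Poly_Mapping.keys (frag_of z \<star> D j)) \<le> 2 * j"
          using card_keys_frag_of_mult[OF z(1) keys_dickson_subset, of j] Suc.IH[of j] j by simp
        moreover have "card (Poly_Mapping.keys (D (2 ^ a - j))) \<le> 2 ^ a - j"
          using Suc.IH[of "2 ^ a - j"] j False by simp
        ultimately show ?thesis
          by simp
      qed
      finally show ?thesis
        using k j by simp
    qed
  qed (use Suc in simp)
qed simp

lemma card_keys_dickson_le: "card (Poly_Mapping.keys (D k)) \<le> max 1 k"
proof (cases k)
  case (Suc n)
  then show ?thesis
    using card_keys_dickson_le_power_of_two[of k k] less_exp[of k] by simp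
qed simp

lemma card_set_starpow_le:
  assumes "1 \<le> r"
  shows "card (set_mset (starpow mul x r)) \<le> r * (r + 1)"
proof -
  have "card (set_mset (starpow mul x r)) \<le> card (\<Union>k\<le>r. Poly_Mapping.keys (D k))"
    using keys_dickson_sums[OF chain_of_starpow_in_dickson_sums[OF assms]] by (intro card_mono) auto
  also have "\<dots> \<le> (\<Sum>k\<le>r. card (Poly_Mapping.keys (D k)))"
    by (rule card_UN_le) simp
  also have "\<dots> \<le> (\<Sum>k\<le>r. max 1 k)"
    using card_keys_dickson_le by (rule sum_mono)
  also have "\<dots> \<le> r * (r + 1)"
    using assms by (induction r rule: nat_induct_at_least) simp_all
  finally show ?thesis .
qed

end

end

theorem mainTheorem7:
  fixes X :: "'a set" and mul :: "'a \<Rightarrow> 'a \<Rightarrow> 'a multiset" and e :: 'a and iv :: "'a \<Rightarrow> 'a"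
  assumes "two_valued_group X mul e iv"
    and "\<forall>a\<in>X. iv a = a"
    and "x \<in> X" and "r \<ge> 1"
  shows "card (set_mset (starpow mul x r)) \<le> r * (r + 1)"
proof -
  interpret dickson_chains X mul e iv x
    using assms by unfold_locales
  show ?thesis
    using card_set_starpow_le assms by simp
qed

end
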